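(* Let $D$ be a connection on a vector bundle $E$ with curvature $\kappa$ and $E_0=\ker\kappa$. Then $D$ is exact if and only if the complex $\Gamma(E_0)\xrightarrow{D}\Gamma(\Lambda^1\otimes E)\xrightarrow{D^\wedge}\Gamma(\Lambda^2\otimes E)$ is exact. In particular, if $D^\wedge:\Lambda^1\otimes E\to\Lambda^2\otimes E$ is injective, then $D$ is exact. Conversely, if $D$ is exact and $\kappa:E\to\Lambda^2\otimes E$ is injective, then $D^\wedge:\Lambda^1\otimes E\to\Lambda^2\otimes E$ is injective.
   Context: $D:E\to\Lambda^1\otimes E$ is a linear connection on a smooth vector bundle; $D^\wedge$ is the exterior covariant derivative $\phi_b{}^\alpha\mapsto D_{[a}\phi_{b]}{}^\alpha$; $\kappa=D^\wedge\circ D$ is the curvature (a bundle homomorphism, assumed of constant rank). $D$ is called exact if every section $\phi$ of $\Lambda^1\otimes E$ such that $D^\wedge\phi=\kappa(\psi)$ for some section $\psi$ of $E$ is of the form $\phi=D\eta$ for some section $\eta$ of $E$. All statements are understood locally (on sufficiently small open sets). *)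

theory Defs
  imports "HOL-Analysis.Analysis"
begin

text \<open>Local model: an open set U in R^n (coordinates indexed by 'n) carrying the
trivial bundle E = U x R^r (fibre coordinates indexed by 'r).
Sections of E: real^'r valued; of Lambda^1 (x) E: real^'r^'n (phi $ b $ alpha);
of Lambda^2 (x) E: real^'r^'n^'n (skew in the two form indices).
A connection is D = d + Gamma with Gamma x $ a a real^'r^'r matrix.\<close>

definition partial :: "'n::finite \<Rightarrow> (real^'n \<Rightarrow> 'b::real_normed_vector) \<Rightarrow> real^'n \<Rightarrow> 'b" where
  "partial i f x = frechet_derivative f (at x) (axis i 1)"

fun Ck_on :: "nat \<Rightarrow> (real^'n::finite \<Rightarrow> 'b::real_normed_vector) \<Rightarrow> (real^'n) set \<Rightarrow> bool" where
  "Ck_on 0 f U = continuous_on U f"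
| "Ck_on (Suc k) f U = (f differentiable_on U \<and> (\<forall>i. Ck_on k (partial i f) U))"

definition smooth_on :: "(real^'n::finite \<Rightarrow> 'b::real_normed_vector) \<Rightarrow> (real^'n) set \<Rightarrow> bool" where
  "smooth_on f U = (\<forall>k. Ck_on k f U)"

definition conn :: "(real^'n::finite \<Rightarrow> real^'r::finite^'r^'n) \<Rightarrow> (real^'n \<Rightarrow> real^'r) \<Rightarrow> real^'n \<Rightarrow> real^'r^'n" where
  "conn \<Gamma> \<eta> x = (\<chi> a. partial a \<eta> x + (\<Gamma> x $ a) *v \<eta> x)"

definition conn_wedge :: "(real^'n::finite \<Rightarrow> real^'r::finite^'r^'n) \<Rightarrow> (real^'n \<Rightarrow> real^'r^'n) \<Rightarrow> real^'n \<Rightarrow> real^'r^'n^'n" where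
  "conn_wedge \<Gamma> \<phi> x = (\<chi> a b.
      (1/2) *\<^sub>R ((partial a (\<lambda>y. \<phi> y $ b) x + (\<Gamma> x $ a) *v (\<phi> x $ b))
               - (partial b (\<lambda>y. \<phi> y $ a) x + (\<Gamma> x $ b) *v (\<phi> x $ a))))"

text \<open>Curvature kappa = D^wedge o D as a bundle homomorphism E -> Lambda^2 (x) E:
 kappa_{ab} = 1/2 (d_a Gamma_b - d_b Gamma_a + Gamma_a Gamma_b - Gamma_b Gamma_a).\<close>
definition curv :: "(real^'n::finite \<Rightarrow> real^'r::finite^'r^'n) \<Rightarrow> real^'n \<Rightarrow> real^'r^'r^'n^'n" where
  "curv \<Gamma> x = (\<chi> a b. (1/2) *\<^sub>R (partial a (\<lambda>y. \<Gamma> y $ b) x - partial b (\<lambda>y. \<Gamma> y $ a) x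
        + (\<Gamma> x $ a) ** (\<Gamma> x $ b) - (\<Gamma> x $ b) ** (\<Gamma> x $ a)))"

definition curv_at :: "(real^'n::finite \<Rightarrow> real^'r::finite^'r^'n) \<Rightarrow> real^'n \<Rightarrow> real^'r \<Rightarrow> real^'r^'n^'n" where
  "curv_at \<Gamma> x v = (\<chi> a b. (curv \<Gamma> x $ a $ b) *v v)"

definition curv_const_rank :: "(real^'n::finite \<Rightarrow> real^'r::finite^'r^'n) \<Rightarrow> (real^'n) set \<Rightarrow> bool" where
  "curv_const_rank \<Gamma> U = (\<exists>k. \<forall>x\<in>U. dim (range (curv_at \<Gamma> x)) = k)"

definition exact_conn :: "(real^'n::finite \<Rightarrow> real^'r::finite^'r^'n) \<Rightarrow> (real^'n) set \<Rightarrow> bool" where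
  "exact_conn \<Gamma> U = (\<forall>V \<phi> \<psi>. open V \<and> V \<subseteq> U \<and> smooth_on \<phi> V \<and> smooth_on \<psi> V \<and>
      (\<forall>x\<in>V. conn_wedge \<Gamma> \<phi> x = curv_at \<Gamma> x (\<psi> x)) \<longrightarrow>
      (\<forall>x\<in>V. \<exists>W \<eta>. open W \<and> x \<in> W \<and> W \<subseteq> V \<and> smooth_on \<eta> W \<and>
          (\<forall>y\<in>W. conn \<Gamma> \<eta> y = \<phi> y)))"

text \<open>Exactness (locally) of Gamma(E_0) --D--> Gamma(Lambda^1 (x) E) --D^wedge--> Gamma(Lambda^2 (x) E),
 E_0 = ker kappa.\<close>
definition complex_exact :: "(real^'n::finite \<Rightarrow> real^'r::finite^'r^'n) \<Rightarrow> (real^'n) set \<Rightarrow> bool" where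
  "complex_exact \<Gamma> U = (\<forall>V \<phi>. open V \<and> V \<subseteq> U \<and> smooth_on \<phi> V \<and>
      (\<forall>x\<in>V. conn_wedge \<Gamma> \<phi> x = 0) \<longrightarrow>
      (\<forall>x\<in>V. \<exists>W \<eta>. open W \<and> x \<in> W \<and> W \<subseteq> V \<and> smooth_on \<eta> W \<and>
          (\<forall>y\<in>W. curv_at \<Gamma> y (\<eta> y) = 0) \<and>
          (\<forall>y\<in>W. conn \<Gamma> \<eta> y = \<phi> y)))"

definition wedge_injective :: "(real^'n::finite \<Rightarrow> real^'r::finite^'r^'n) \<Rightarrow> (real^'n) set \<Rightarrow> bool" where
  "wedge_injective \<Gamma> U = (\<forall>V \<phi>. open V \<and> V \<subseteq> U \<and> smooth_on \<phi> V \<and>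
      (\<forall>x\<in>V. conn_wedge \<Gamma> \<phi> x = 0) \<longrightarrow> (\<forall>x\<in>V. \<phi> x = 0))"

definition curv_injective :: "(real^'n::finite \<Rightarrow> real^'r::finite^'r^'n) \<Rightarrow> (real^'n) set \<Rightarrow> bool" where
  "curv_injective \<Gamma> U = (\<forall>x\<in>U. inj (curv_at \<Gamma> x))"

end

theory Submission
  imports Defs
begin

text \<open>Everything rests on the identity \<open>D\<^sup>\<and>(D\<eta>) = \<kappa>(\<eta>)\<close> for sections \<open>\<eta>\<close> of class \<open>C\<^sup>2\<close>,
  in which the second derivatives of \<open>\<eta>\<close> cancel because mixed partial derivatives commute.
  Hence, if \<open>D\<^sup>\<and>\<phi> = \<kappa>(\<psi>)\<close>, then \<open>\<phi> - D\<psi>\<close> is \<open>D\<^sup>\<and>\<close>-closed, so \<open>D\<close> is exact iff every closed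
  \<open>\<phi>\<close> is locally of the form \<open>D\<eta>\<close>; and then automatically \<open>\<kappa>(\<eta>) = D\<^sup>\<and>D\<eta> = D\<^sup>\<and>\<phi> = 0\<close>, i.e.
  \<open>\<eta>\<close> is a section of \<open>E\<^sub>0\<close>. If \<open>D\<^sup>\<and>\<close> is injective, then \<open>\<phi> = D\<psi>\<close> outright; if \<open>\<kappa>\<close> is
  injective, then \<open>E\<^sub>0 = 0\<close> and every closed \<open>\<phi>\<close> is \<open>D0 = 0\<close>. All of this is local and
  pointwise.\<close>

subsection \<open>Partial derivatives\<close>

lemma partial_eqI:
  "(f has_derivative f') (at x) \<Longrightarrow> partial i f x = f' (axis i 1)"
  unfolding partial_def by (metis frechet_derivative_at)

text \<open>No differentiability is assumed: away from differentiable points both sides are the same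
  junk value of the \<open>SOME\<close> in \<^const>\<open>frechet_derivative\<close>.\<close>
lemma partial_cong_open:
  assumes "open W" "x \<in> W" "\<And>y. y \<in> W \<Longrightarrow> f y = g y"
  shows "partial i f x = partial i g x"
proof -
  have "(f has_derivative f') (at x) \<longleftrightarrow> (g has_derivative f') (at x)" for f'
    using assms(3) by (auto elim: has_derivative_transform_within_open[OF _ assms(1,2)])
  then show ?thesis
    unfolding partial_def frechet_derivative_def by simp
qed

lemma partial_const: "partial i (\<lambda>y. c) x = 0"
  by (rule partial_eqI[where f'="\<lambda>_. 0", simplified]) simp

lemma partial_bounded_linear:
  assumes "bounded_linear L" "f differentiable at x"
  shows "partial i (\<lambda>y. L (f y)) x = L (partial i f x)"
proof -
  have "(f has_derivative frechet_derivative f (at x)) (at x)"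
    using assms(2) frechet_derivative_works by blast
  from bounded_linear.has_derivative[OF assms(1) this] show ?thesis
    by (simp add: partial_eqI) (simp add: partial_def)
qed

lemma partial_bounded_bilinear:
  assumes "bounded_bilinear P" "f differentiable at x" "g differentiable at x"
  shows "partial i (\<lambda>y. P (f y) (g y)) x = P (partial i f x) (g x) + P (f x) (partial i g x)"
proof -
  have "(f has_derivative frechet_derivative f (at x)) (at x)"
       "(g has_derivative frechet_derivative g (at x)) (at x)"
    using assms(2,3) frechet_derivative_works by blast+
  from bounded_bilinear.FDERIV[OF assms(1) this] show ?thesis
    by (simp add: partial_eqI) (simp add: partial_def add.commute)
qed

lemma partial_add:
  assumes "f differentiable at x" "g differentiable at x"
  shows "partial i (\<lambda>y. f y + g y) x = partial i f x + partial i g x"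
proof -
  have "(f has_derivative frechet_derivative f (at x)) (at x)"
       "(g has_derivative frechet_derivative g (at x)) (at x)"
    using assms frechet_derivative_works by blast+
  from has_derivative_add[OF this] show ?thesis
    by (simp add: partial_eqI) (simp add: partial_def)
qed

lemma partial_diff:
  assumes "f differentiable at x" "g differentiable at x"
  shows "partial i (\<lambda>y. f y - g y) x = partial i f x - partial i g x"
proof -
  have "(f has_derivative frechet_derivative f (at x)) (at x)"
       "(g has_derivative frechet_derivative g (at x)) (at x)"
    using assms frechet_derivative_works by blast+
  from has_derivative_diff[OF this] show ?thesis
    by (simp add: partial_eqI) (simp add: partial_def)
qed

lemma differentiable_bounded_linear_comp:
  "bounded_linear L \<Longrightarrow> f differentiable at x \<Longrightarrow> (\<lambda>y. L (f y)) differentiable at x"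
  unfolding differentiable_def using bounded_linear.has_derivative by blast

lemma differentiable_bounded_bilinear_comp:
  "bounded_bilinear P \<Longrightarrow> f differentiable at x \<Longrightarrow> g differentiable at x
    \<Longrightarrow> (\<lambda>y. P (f y) (g y)) differentiable at x"
  unfolding differentiable_def using bounded_bilinear.FDERIV by blast

lemma has_real_derivative_along_axis:
  fixes f :: "real^'n::finite \<Rightarrow> real"
  assumes "f differentiable at (p + t *\<^sub>R axis i 1)"
  shows "((\<lambda>s. f (p + s *\<^sub>R axis i 1)) has_real_derivative partial i f (p + t *\<^sub>R axis i 1)) (at t)"
proof -
  let ?f' = "frechet_derivative f (at (p + t *\<^sub>R axis i 1))"
  have line: "((\<lambda>s. p + s *\<^sub>R axis i (1::real)) has_derivative (\<lambda>s. s *\<^sub>R axis i 1)) (at t)"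
    by (auto intro!: derivative_eq_intros)
  have f': "(f has_derivative ?f') (at (p + t *\<^sub>R axis i 1))"
    using assms frechet_derivative_works by blast
  have "((\<lambda>s. f (p + s *\<^sub>R axis i 1)) has_derivative (\<lambda>s. ?f' (s *\<^sub>R axis i 1))) (at t)"
    using diff_chain_at[OF line f'] by (simp add: o_def)
  moreover have "(\<lambda>s. ?f' (s *\<^sub>R axis i 1)) = (*) (partial i f (p + t *\<^sub>R axis i 1))"
    using linear_cmul[OF has_derivative_linear[OF f']] by (auto simp: partial_def)
  ultimately show ?thesis
    unfolding has_field_derivative_def by simp
qed

subsection \<open>Functions of class \<open>C\<^sup>k\<close> and smooth functions\<close>

lemma Ck_on_SucD: "Ck_on (Suc k) f U \<Longrightarrow> Ck_on k f U"
  by (induction k arbitrary: f) (simp_all add: differentiable_imp_continuous_on)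

lemma Ck_on_2_imp_differentiable_at:
  assumes "open U" "Ck_on 2 f U" "x \<in> U"
  shows "f differentiable at x" and "partial i f differentiable at x"
  using assms by (auto simp: numeral_2_eq_2 differentiable_on_eq_differentiable_at[OF assms(1)])

lemma Ck_on_subset: "Ck_on k f U \<Longrightarrow> W \<subseteq> U \<Longrightarrow> Ck_on k f W"
  by (induction k arbitrary: f) (auto intro: continuous_on_subset differentiable_on_subset)

lemma Ck_on_cong_open:
  assumes "open U" "\<And>x. x \<in> U \<Longrightarrow> f x = g x" "Ck_on k f U"
  shows "Ck_on k g U"
  using assms(2,3)
proof (induction k arbitrary: f g)
  case 0
  then show ?case by (metis Ck_on.simps(1) continuous_on_cong)
next
  case (Suc k)
  have "g differentiable at x" if x: "x \<in> U" for x
  proof -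
    obtain f' where "(f has_derivative f') (at x)"
      using Suc.prems(2) x
      by (auto simp: differentiable_on_eq_differentiable_at[OF assms(1)] differentiable_def)
    then have "(g has_derivative f') (at x)"
      using Suc.prems(1) by (rule has_derivative_transform_within_open[OF _ assms(1) x])
    then show ?thesis by (rule differentiableI)
  qed
  then have "g differentiable_on U"
    by (simp add: differentiable_on_eq_differentiable_at[OF assms(1)])
  moreover have "Ck_on k (partial i g) U" for i
  proof (rule Suc.IH)
    show "partial i f x = partial i g x" if "x \<in> U" for x
      using partial_cong_open[OF assms(1) that] Suc.prems(1) by blast
    show "Ck_on k (partial i f) U"
      using Suc.prems(2) by simp
  qed
  ultimately show ?case by simp
qed

lemma Ck_on_const: "Ck_on k (\<lambda>x. c) U"
  by (induction k arbitrary: c) (simp_all add: partial_const[abs_def])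

lemma Ck_on_bounded_linear:
  assumes "open U" "bounded_linear L"
  shows "Ck_on k f U \<Longrightarrow> Ck_on k (\<lambda>x. L (f x)) U"
proof (induction k arbitrary: f)
  case 0
  then show ?case
    using assms(2) by (simp add: bounded_linear.continuous_on continuous_on_id' continuous_on_compose2)
next
  case (Suc k)
  have df: "\<forall>x\<in>U. f differentiable at x"
    using Suc.prems by (simp add: differentiable_on_eq_differentiable_at[OF assms(1)])
  then have "(\<lambda>x. L (f x)) differentiable_on U"
    using differentiable_bounded_linear_comp[OF assms(2)]
      differentiable_on_eq_differentiable_at[OF assms(1)] by blast
  moreover have "Ck_on k (partial i (\<lambda>x. L (f x))) U" for i
  proof (rule Ck_on_cong_open[OF assms(1)])
    show "Ck_on k (\<lambda>x. L (partial i f x)) U"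
      using Suc by simp
    show "L (partial i f x) = partial i (\<lambda>x. L (f x)) x" if "x \<in> U" for x
      using partial_bounded_linear[OF assms(2)] df that by metis
  qed
  ultimately show ?case by simp
qed

lemma Ck_on_add:
  assumes "open U"
  shows "Ck_on k f U \<Longrightarrow> Ck_on k g U \<Longrightarrow> Ck_on k (\<lambda>x. f x + g x) U"
proof (induction k arbitrary: f g)
  case 0
  then show ?case by (simp add: continuous_on_add)
next
  case (Suc k)
  have d: "\<forall>x\<in>U. f differentiable at x" "\<forall>x\<in>U. g differentiable at x"
    using Suc.prems by (simp_all add: differentiable_on_eq_differentiable_at[OF assms(1)])
  then have "(\<lambda>x. f x + g x) differentiable_on U"
    by (simp add: differentiable_on_eq_differentiable_at[OF assms(1)])
  moreover have "Ck_on k (partial i (\<lambda>x. f x + g x)) U" for i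
  proof (rule Ck_on_cong_open[OF assms(1)])
    show "Ck_on k (\<lambda>x. partial i f x + partial i g x) U"
      using Suc by simp
    show "partial i f x + partial i g x = partial i (\<lambda>x. f x + g x) x" if "x \<in> U" for x
      using partial_add d that by metis
  qed
  ultimately show ?case by simp
qed

lemma Ck_on_bounded_bilinear:
  assumes "open U" "bounded_bilinear P"
  shows "Ck_on k f U \<Longrightarrow> Ck_on k g U \<Longrightarrow> Ck_on k (\<lambda>x. P (f x) (g x)) U"
proof (induction k arbitrary: f g)
  case 0
  then show ?case
    using assms(2) by (simp add: bounded_bilinear.continuous_on)
next
  case (Suc k)
  have d: "\<forall>x\<in>U. f differentiable at x" "\<forall>x\<in>U. g differentiable at x"
    using Suc.prems by (simp_all add: differentiable_on_eq_differentiable_at[OF assms(1)])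
  then have "(\<lambda>x. P (f x) (g x)) differentiable_on U"
    using differentiable_bounded_bilinear_comp[OF assms(2)]
      differentiable_on_eq_differentiable_at[OF assms(1)] by blast
  moreover have "Ck_on k (partial i (\<lambda>x. P (f x) (g x))) U" for i
  proof (rule Ck_on_cong_open[OF assms(1)])
    have "Ck_on k (partial i f) U" "Ck_on k (partial i g) U" "Ck_on k f U" "Ck_on k g U"
      using Suc.prems Ck_on_SucD by auto
    then show "Ck_on k (\<lambda>x. P (partial i f x) (g x) + P (f x) (partial i g x)) U"
      using Suc.IH Ck_on_add[OF assms(1)] by blast
    show "P (partial i f x) (g x) + P (f x) (partial i g x) = partial i (\<lambda>x. P (f x) (g x)) x"
      if "x \<in> U" for x
      using partial_bounded_bilinear[OF assms(2)] d that by metis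
  qed
  ultimately show ?case by simp
qed

lemma smooth_on_imp_Ck_on: "smooth_on f U \<Longrightarrow> Ck_on k f U"
  by (simp add: smooth_on_def)

lemma smooth_on_imp_differentiable_at:
  "open U \<Longrightarrow> smooth_on f U \<Longrightarrow> x \<in> U \<Longrightarrow> f differentiable at x"
  using smooth_on_imp_Ck_on[of f U 1] by (simp add: differentiable_on_eq_differentiable_at)

lemma smooth_on_subset: "smooth_on f U \<Longrightarrow> W \<subseteq> U \<Longrightarrow> smooth_on f W"
  unfolding smooth_on_def using Ck_on_subset by blast

lemma smooth_on_const: "smooth_on (\<lambda>x. c) U"
  unfolding smooth_on_def using Ck_on_const by blast

lemma smooth_on_partial: "smooth_on f U \<Longrightarrow> smooth_on (partial i f) U"
  unfolding smooth_on_def by (metis Ck_on.simps(2))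

lemma smooth_on_bounded_linear:
  "open U \<Longrightarrow> bounded_linear L \<Longrightarrow> smooth_on f U \<Longrightarrow> smooth_on (\<lambda>x. L (f x)) U"
  unfolding smooth_on_def using Ck_on_bounded_linear by blast

lemma smooth_on_add:
  "open U \<Longrightarrow> smooth_on f U \<Longrightarrow> smooth_on g U \<Longrightarrow> smooth_on (\<lambda>x. f x + g x) U"
  unfolding smooth_on_def using Ck_on_add by blast

lemma smooth_on_diff:
  assumes "open U" "smooth_on f U" "smooth_on g U"
  shows "smooth_on (\<lambda>x. f x - g x) U"
  using smooth_on_add[OF assms(1,2)
      smooth_on_bounded_linear[OF assms(1) bounded_linear_minus[OF bounded_linear_ident] assms(3)]]
  by simp

lemma smooth_on_bounded_bilinear:
  "open U \<Longrightarrow> bounded_bilinear P \<Longrightarrow> smooth_on f U \<Longrightarrow> smooth_on g U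
    \<Longrightarrow> smooth_on (\<lambda>x. P (f x) (g x)) U"
  unfolding smooth_on_def using Ck_on_bounded_bilinear by blast

lemma smooth_on_sum:
  assumes "open U" "finite S" "\<And>a. a \<in> S \<Longrightarrow> smooth_on (f a) U"
  shows "smooth_on (\<lambda>x. \<Sum>a\<in>S. f a x) U"
  using assms(2,3)
  by (induction S rule: finite_induct) (simp_all add: smooth_on_const smooth_on_add[OF assms(1)])

lemma bounded_linear_axis: "bounded_linear (axis i :: 'b::euclidean_space \<Rightarrow> 'b^'n::finite)"
proof -
  have "linear (axis i :: 'b \<Rightarrow> 'b^'n)"
    by (rule linearI) (simp_all add: axis_def vec_eq_iff)
  then show ?thesis by (simp add: linear_conv_bounded_linear)
qed

lemma smooth_on_vec_lambda:
  fixes f :: "'n::finite \<Rightarrow> real^'m::finite \<Rightarrow> 'b::euclidean_space"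
  assumes "open U" "\<And>a. smooth_on (f a) U"
  shows "smooth_on (\<lambda>x. \<chi> a. f a x) U"
proof -
  have "(\<chi> a. f a x) = (\<Sum>a\<in>UNIV. axis a (f a x))" for x
    by (simp add: vec_eq_iff axis_def)
  moreover have "smooth_on (\<lambda>x. \<Sum>a\<in>UNIV. axis a (f a x)) U"
    by (intro smooth_on_sum smooth_on_bounded_linear[OF assms(1) bounded_linear_axis] assms) simp_all
  ultimately show ?thesis by simp
qed

subsection \<open>Symmetry of second partial derivatives\<close>

lemma mvt_along_axis:
  fixes f :: "real^'n::finite \<Rightarrow> real"
  assumes "0 < h" "\<And>t. 0 \<le> t \<Longrightarrow> t \<le> h \<Longrightarrow> f differentiable at (p + t *\<^sub>R axis i 1)"
  shows "\<exists>\<tau>. 0 < \<tau> \<and> \<tau> < h \<and> f (p + h *\<^sub>R axis i 1) - f p = h * partial i f (p + \<tau> *\<^sub>R axis i 1)"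
  using MVT2[OF assms(1), of "\<lambda>s. f (p + s *\<^sub>R axis i 1)"] has_real_derivative_along_axis assms(2)
  by fastforce

lemma mvt_along_axis_diff:
  fixes f g :: "real^'n::finite \<Rightarrow> real"
  assumes "0 < h"
    and "\<And>t. 0 \<le> t \<Longrightarrow> t \<le> h \<Longrightarrow> f differentiable at (p + t *\<^sub>R axis i 1)"
    and "\<And>t. 0 \<le> t \<Longrightarrow> t \<le> h \<Longrightarrow> g differentiable at (q + t *\<^sub>R axis i 1)"
  shows "\<exists>\<tau>. 0 < \<tau> \<and> \<tau> < h \<and>
     (f (p + h *\<^sub>R axis i 1) - g (q + h *\<^sub>R axis i 1)) - (f p - g q)
       = h * (partial i f (p + \<tau> *\<^sub>R axis i 1) - partial i g (q + \<tau> *\<^sub>R axis i 1))"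
  using MVT2[OF assms(1), of "\<lambda>s. f (p + s *\<^sub>R axis i 1) - g (q + s *\<^sub>R axis i 1)"]
    DERIV_diff[OF has_real_derivative_along_axis has_real_derivative_along_axis] assms(2,3)
  by fastforce

lemma second_difference_eq_mixed_partial:
  fixes f :: "real^'n::finite \<Rightarrow> real"
  assumes "0 < h"
    and in_V: "\<And>s t. 0 \<le> s \<Longrightarrow> s \<le> h \<Longrightarrow> 0 \<le> t \<Longrightarrow> t \<le> h
      \<Longrightarrow> x + s *\<^sub>R axis a 1 + t *\<^sub>R axis b 1 \<in> V"
    and df: "\<And>y. y \<in> V \<Longrightarrow> f differentiable at y"
    and dfa: "\<And>y. y \<in> V \<Longrightarrow> partial a f differentiable at y"
  obtains s t where "0 < s" "s < h" "0 < t" "t < h"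
    "f (x + h *\<^sub>R axis a 1 + h *\<^sub>R axis b 1) - f (x + h *\<^sub>R axis a 1) - f (x + h *\<^sub>R axis b 1) + f x
      = h * h * partial b (partial a f) (x + s *\<^sub>R axis a 1 + t *\<^sub>R axis b 1)"
proof -
  have "\<exists>\<sigma>. 0 < \<sigma> \<and> \<sigma> < h \<and>
     (f ((x + h *\<^sub>R axis b 1) + h *\<^sub>R axis a 1) - f (x + h *\<^sub>R axis a 1)) - (f (x + h *\<^sub>R axis b 1) - f x)
       = h * (partial a f ((x + h *\<^sub>R axis b 1) + \<sigma> *\<^sub>R axis a 1) - partial a f (x + \<sigma> *\<^sub>R axis a 1))"
  proof (rule mvt_along_axis_diff[OF assms(1)])
    fix t :: real assume "0 \<le> t" "t \<le> h"
    then show "f differentiable at (x + h *\<^sub>R axis b 1 + t *\<^sub>R axis a 1)"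
      using df in_V[of t h] assms(1) by (simp add: add_ac)
    show "f differentiable at (x + t *\<^sub>R axis a 1)"
      using df in_V[of t 0] assms(1) \<open>0 \<le> t\<close> \<open>t \<le> h\<close> by simp
  qed
  then obtain \<sigma> where \<sigma>: "0 < \<sigma>" "\<sigma> < h" and diff_a:
    "(f ((x + h *\<^sub>R axis b 1) + h *\<^sub>R axis a 1) - f (x + h *\<^sub>R axis a 1)) - (f (x + h *\<^sub>R axis b 1) - f x)
       = h * (partial a f ((x + h *\<^sub>R axis b 1) + \<sigma> *\<^sub>R axis a 1) - partial a f (x + \<sigma> *\<^sub>R axis a 1))"
    by blast
  have "\<exists>\<tau>. 0 < \<tau> \<and> \<tau> < h \<and>
     partial a f ((x + \<sigma> *\<^sub>R axis a 1) + h *\<^sub>R axis b 1) - partial a f (x + \<sigma> *\<^sub>R axis a 1)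
       = h * partial b (partial a f) ((x + \<sigma> *\<^sub>R axis a 1) + \<tau> *\<^sub>R axis b 1)"
    using dfa in_V[of \<sigma>] \<sigma> by (intro mvt_along_axis[OF assms(1)]) simp
  then obtain \<tau> where \<tau>: "0 < \<tau>" "\<tau> < h" and diff_b:
     "partial a f ((x + \<sigma> *\<^sub>R axis a 1) + h *\<^sub>R axis b 1) - partial a f (x + \<sigma> *\<^sub>R axis a 1)
       = h * partial b (partial a f) ((x + \<sigma> *\<^sub>R axis a 1) + \<tau> *\<^sub>R axis b 1)"
    by blast
  have "x + h *\<^sub>R axis b 1 + \<sigma> *\<^sub>R axis a 1 = x + \<sigma> *\<^sub>R axis a 1 + h *\<^sub>R axis b 1"
       "x + h *\<^sub>R axis b 1 + h *\<^sub>R axis a 1 = x + h *\<^sub>R axis a 1 + h *\<^sub>R axis b 1"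
    by (simp_all add: add_ac)
  with diff_a diff_b have
    "f (x + h *\<^sub>R axis a 1 + h *\<^sub>R axis b 1) - f (x + h *\<^sub>R axis a 1) - f (x + h *\<^sub>R axis b 1) + f x
      = h * h * partial b (partial a f) (x + \<sigma> *\<^sub>R axis a 1 + \<tau> *\<^sub>R axis b 1)"
    by (simp add: algebra_simps)
  with \<sigma> \<tau> show ?thesis by (rule that)
qed

lemma dist_add_axes_le:
  fixes x :: "real^'n::finite"
  assumes "0 \<le> s" "0 \<le> t"
  shows "dist (x + s *\<^sub>R axis a 1 + t *\<^sub>R axis b 1) x \<le> s + t"
proof -
  have "dist (x + s *\<^sub>R axis a 1 + t *\<^sub>R axis b 1) x = norm (s *\<^sub>R axis a (1::real) + t *\<^sub>R axis b 1)"
    by (simp add: dist_norm)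
  also have "\<dots> \<le> norm (s *\<^sub>R axis a (1::real)) + norm (t *\<^sub>R axis b (1::real))"
    by (rule norm_triangle_ineq)
  finally show ?thesis
    using assms by simp
qed

lemma mixed_partials_equal_at_nearby_points:
  fixes f :: "real^'n::finite \<Rightarrow> real"
  assumes "0 < h"
    and in_V: "\<And>s t i j. 0 \<le> s \<Longrightarrow> s \<le> h \<Longrightarrow> 0 \<le> t \<Longrightarrow> t \<le> h
      \<Longrightarrow> x + s *\<^sub>R axis i 1 + t *\<^sub>R axis j 1 \<in> V"
    and df: "\<And>y. y \<in> V \<Longrightarrow> f differentiable at y"
    and dfi: "\<And>i y. y \<in> V \<Longrightarrow> partial i f differentiable at y"
  obtains s1 t1 s2 t2 where "0 < s1" "s1 < h" "0 < t1" "t1 < h" "0 < s2" "s2 < h" "0 < t2" "t2 < h"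
    and "partial b (partial a f) (x + s1 *\<^sub>R axis a 1 + t1 *\<^sub>R axis b 1)
      = partial a (partial b f) (x + s2 *\<^sub>R axis b 1 + t2 *\<^sub>R axis a 1)"
proof -
  obtain s1 t1 where st1: "0 < s1" "s1 < h" "0 < t1" "t1 < h" and A:
    "f (x + h *\<^sub>R axis a 1 + h *\<^sub>R axis b 1) - f (x + h *\<^sub>R axis a 1) - f (x + h *\<^sub>R axis b 1) + f x
      = h * h * partial b (partial a f) (x + s1 *\<^sub>R axis a 1 + t1 *\<^sub>R axis b 1)"
    using second_difference_eq_mixed_partial[OF assms(1) in_V df dfi] by blast
  obtain s2 t2 where st2: "0 < s2" "s2 < h" "0 < t2" "t2 < h" and B:
    "f (x + h *\<^sub>R axis b 1 + h *\<^sub>R axis a 1) - f (x + h *\<^sub>R axis b 1) - f (x + h *\<^sub>R axis a 1) + f x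
      = h * h * partial a (partial b f) (x + s2 *\<^sub>R axis b 1 + t2 *\<^sub>R axis a 1)"
    using second_difference_eq_mixed_partial[OF assms(1) in_V df dfi] by blast
  have "x + h *\<^sub>R axis b 1 + h *\<^sub>R axis a 1 = x + h *\<^sub>R axis a 1 + h *\<^sub>R axis b 1"
    by (simp add: add_ac)
  with A B assms(1) have "partial b (partial a f) (x + s1 *\<^sub>R axis a 1 + t1 *\<^sub>R axis b 1)
      = partial a (partial b f) (x + s2 *\<^sub>R axis b 1 + t2 *\<^sub>R axis a 1)"
    by (simp add: algebra_simps)
  with st1 st2 show ?thesis by (rule that)
qed

text \<open>By the mean value theorem both mixed partials equal the same second difference quotient,
  at points of an arbitrarily small square at \<open>x\<close>; continuity at \<open>x\<close> forces them to agree.\<close>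
lemma partial_commute_real:
  fixes f :: "real^'n::finite \<Rightarrow> real"
  assumes "open V" "x \<in> V" "Ck_on 2 f V"
  shows "partial a (partial b f) x = partial b (partial a f) x"
proof (rule ccontr)
  let ?A = "partial b (partial a f)" and ?B = "partial a (partial b f)"
  assume "?B x \<noteq> ?A x"
  define e where "e = \<bar>?A x - ?B x\<bar> / 2"
  have "e > 0"
    using \<open>?B x \<noteq> ?A x\<close> by (simp add: e_def)
  note df = Ck_on_2_imp_differentiable_at(1)[OF assms(1,3)]
    and dfi = Ck_on_2_imp_differentiable_at(2)[OF assms(1,3)]
  have "isCont ?A x" "isCont ?B x"
    using assms continuous_on_eq_continuous_at by (auto simp: numeral_2_eq_2)
  then have "\<forall>\<^sub>F y in nhds x. y \<in> V \<and> dist (?A y) (?A x) < e \<and> dist (?B y) (?B x) < e"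
    using eventually_nhds_in_open[OF assms(1,2)] \<open>e > 0\<close>
    by (auto intro!: eventually_conj tendstoD simp: isCont_def tendsto_at_iff_tendsto_nhds)
  then obtain d where "d > 0"
    and near: "\<And>y. dist y x < d \<Longrightarrow> y \<in> V \<and> dist (?A y) (?A x) < e \<and> dist (?B y) (?B x) < e"
    unfolding eventually_nhds_metric by blast
  define h where "h = d / 3"
  have "h > 0"
    using \<open>d > 0\<close> by (simp add: h_def)
  have near_square: "dist (x + s *\<^sub>R axis i 1 + t *\<^sub>R axis j 1) x < d"
    if "0 \<le> s" "s \<le> h" "0 \<le> t" "t \<le> h" for s t i j
    using dist_add_axes_le[of s t x i j] that \<open>d > 0\<close> by (simp add: h_def)
  have in_V: "x + s *\<^sub>R axis i 1 + t *\<^sub>R axis j 1 \<in> V"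
    if "0 \<le> s" "s \<le> h" "0 \<le> t" "t \<le> h" for s t i j
    using near[OF near_square[OF that]] by blast
  obtain s1 t1 s2 t2 where "0 < s1" "s1 < h" "0 < t1" "t1 < h" "0 < s2" "s2 < h" "0 < t2" "t2 < h"
    and "?A (x + s1 *\<^sub>R axis a 1 + t1 *\<^sub>R axis b 1) = ?B (x + s2 *\<^sub>R axis b 1 + t2 *\<^sub>R axis a 1)"
    by (rule mixed_partials_equal_at_nearby_points[OF \<open>h > 0\<close> in_V df dfi])
  moreover have "dist (?A (x + s1 *\<^sub>R axis a 1 + t1 *\<^sub>R axis b 1)) (?A x) < e"
    using near[OF near_square] \<open>0 < s1\<close> \<open>s1 < h\<close> \<open>0 < t1\<close> \<open>t1 < h\<close> by simp
  moreover have "dist (?B (x + s2 *\<^sub>R axis b 1 + t2 *\<^sub>R axis a 1)) (?B x) < e"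
    using near[OF near_square] \<open>0 < s2\<close> \<open>s2 < h\<close> \<open>0 < t2\<close> \<open>t2 < h\<close> by simp
  ultimately have "\<bar>?A x - ?B x\<bar> < 2 * e"
    by (simp add: dist_real_def)
  then show False
    by (simp add: e_def)
qed

lemma partial_commute:
  fixes f :: "real^'n::finite \<Rightarrow> real^'m::finite"
  assumes "open V" "x \<in> V" "Ck_on 2 f V"
  shows "partial a (partial b f) x = partial b (partial a f) x"
proof -
  note df = Ck_on_2_imp_differentiable_at(1)[OF assms(1,3)]
    and dfi = Ck_on_2_imp_differentiable_at(2)[OF assms(1,3)]
  have "partial a (partial b f) x $ k = partial b (partial a f) x $ k" for k
  proof -
    let ?f = "\<lambda>y. f y $ k"
    have partial_component: "partial i ?f y = partial i f y $ k" if "y \<in> V" for i y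
      using partial_bounded_linear[OF bounded_linear_vec_nth df[OF that]] .
    have "partial a (partial b f) x $ k = partial a (\<lambda>y. partial b f y $ k) x"
      using partial_bounded_linear[OF bounded_linear_vec_nth dfi[OF assms(2)]] by simp
    also have "\<dots> = partial a (partial b ?f) x"
      by (rule partial_cong_open[OF assms(1,2)]) (simp add: partial_component)
    also have "\<dots> = partial b (partial a ?f) x"
      using partial_commute_real[OF assms(1,2) Ck_on_bounded_linear[OF assms(1) bounded_linear_vec_nth assms(3)]] .
    also have "\<dots> = partial b (\<lambda>y. partial a f y $ k) x"
      by (rule partial_cong_open[OF assms(1,2)]) (simp add: partial_component)
    also have "\<dots> = partial b (partial a f) x $ k"
      using partial_bounded_linear[OF bounded_linear_vec_nth dfi[OF assms(2)]] by simp
    finally show ?thesis .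
  qed
  then show ?thesis by (simp add: vec_eq_iff)
qed

subsection \<open>The identity \<open>D\<^sup>\<and> \<circ> D = \<kappa>\<close>\<close>

lemma bounded_bilinear_matrix_vector_mult:
  "bounded_bilinear (\<lambda>(M::real^'m::finite^'k::finite) (v::real^'m). M *v v)"
proof -
  have "bilinear (\<lambda>(M::real^'m^'k) (v::real^'m). M *v v)"
    unfolding bilinear_def
    by (auto intro!: linearI simp: matrix_vector_mult_add_rdistrib matrix_vector_right_distrib
        scaleR_matrix_vector_assoc matrix_vector_mult_scaleR)
  then show ?thesis
    using bilinear_conv_bounded_bilinear by blast
qed

lemma conn_cong_open:
  assumes "open W" "x \<in> W" "\<And>y. y \<in> W \<Longrightarrow> \<eta> y = \<eta>' y"
  shows "conn \<Gamma> \<eta> x = conn \<Gamma> \<eta>' x"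
  using partial_cong_open[OF assms] assms(2,3) by (simp add: conn_def)

lemma conn_wedge_cong_open:
  assumes "open W" "x \<in> W" "\<And>y. y \<in> W \<Longrightarrow> \<phi> y = \<phi>' y"
  shows "conn_wedge \<Gamma> \<phi> x = conn_wedge \<Gamma> \<phi>' x"
proof -
  have "partial a (\<lambda>y. \<phi> y $ b) x = partial a (\<lambda>y. \<phi>' y $ b) x" for a b
    by (rule partial_cong_open[OF assms(1,2)]) (simp add: assms(3))
  then show ?thesis
    using assms(2,3) by (simp add: conn_wedge_def)
qed

lemma conn_zero: "conn \<Gamma> (\<lambda>_. 0) x = 0"
  by (simp add: conn_def partial_const vec_eq_iff)

lemma curv_at_zero: "curv_at \<Gamma> x 0 = 0"
  by (simp add: curv_at_def vec_eq_iff)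

lemma conn_add:
  assumes "\<eta>1 differentiable at x" "\<eta>2 differentiable at x"
  shows "conn \<Gamma> (\<lambda>y. \<eta>1 y + \<eta>2 y) x = conn \<Gamma> \<eta>1 x + conn \<Gamma> \<eta>2 x"
  using partial_add[OF assms]
  by (simp add: conn_def vec_eq_iff matrix_vector_right_distrib algebra_simps)

lemma conn_wedge_diff:
  assumes "\<phi>1 differentiable at x" "\<phi>2 differentiable at x"
  shows "conn_wedge \<Gamma> (\<lambda>y. \<phi>1 y - \<phi>2 y) x = conn_wedge \<Gamma> \<phi>1 x - conn_wedge \<Gamma> \<phi>2 x"
proof -
  have partial_component_diff: "partial a (\<lambda>y. \<phi>1 y $ b - \<phi>2 y $ b) x
      = partial a (\<lambda>y. \<phi>1 y $ b) x - partial a (\<lambda>y. \<phi>2 y $ b) x" for a b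
    by (intro partial_diff differentiable_bounded_linear_comp[OF bounded_linear_vec_nth] assms)
  show ?thesis
    by (simp add: conn_wedge_def vec_eq_iff partial_component_diff matrix_vector_mult_diff_distrib
        algebra_simps)
qed

lemma smooth_on_conn:
  assumes "open V" "smooth_on \<Gamma> V" "smooth_on \<eta> V"
  shows "smooth_on (conn \<Gamma> \<eta>) V"
proof -
  have "smooth_on (\<lambda>x. partial a \<eta> x + (\<Gamma> x $ a) *v \<eta> x) V" for a
    using assms smooth_on_partial
    by (intro smooth_on_add smooth_on_bounded_bilinear[OF assms(1) bounded_bilinear_matrix_vector_mult]
        smooth_on_bounded_linear[OF assms(1) bounded_linear_vec_nth]) simp_all
  then show ?thesis
    unfolding conn_def[abs_def] by (rule smooth_on_vec_lambda[OF assms(1)])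
qed

lemma partial_conn:
  assumes "\<Gamma> differentiable at x" "\<eta> differentiable at x" "partial b \<eta> differentiable at x"
  shows "partial a (\<lambda>y. conn \<Gamma> \<eta> y $ b) x = partial a (partial b \<eta>) x
      + (partial a (\<lambda>y. \<Gamma> y $ b) x *v \<eta> x + (\<Gamma> x $ b) *v partial a \<eta> x)"
proof -
  have "(\<lambda>y. \<Gamma> y $ b) differentiable at x"
    using differentiable_bounded_linear_comp[OF bounded_linear_vec_nth assms(1)] .
  note product_rule = partial_bounded_bilinear[OF bounded_bilinear_matrix_vector_mult this assms(2)]
    and product_differentiable =
      differentiable_bounded_bilinear_comp[OF bounded_bilinear_matrix_vector_mult this assms(2)]
  show ?thesis
    using partial_add[OF assms(3)] product_rule product_differentiable by (simp add: conn_def)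
qed

text \<open>The derivatives of \<open>\<eta>\<close> cancel in pairs, the second ones by symmetry of mixed partials.\<close>
lemma conn_wedge_conn:
  assumes "open V" "x \<in> V" "Ck_on 2 \<eta> V" "\<Gamma> differentiable at x"
  shows "conn_wedge \<Gamma> (conn \<Gamma> \<eta>) x = curv_at \<Gamma> x (\<eta> x)"
proof -
  have "conn_wedge \<Gamma> (conn \<Gamma> \<eta>) x $ a $ b = curv_at \<Gamma> x (\<eta> x) $ a $ b" for a b
  proof -
    note pc = partial_conn[OF assms(4) Ck_on_2_imp_differentiable_at[OF assms(1,3,2)]]
    have lhs: "conn_wedge \<Gamma> (conn \<Gamma> \<eta>) x $ a $ b = (1/2) *\<^sub>R
      ((partial a (\<lambda>y. conn \<Gamma> \<eta> y $ b) x + (\<Gamma> x $ a) *v (partial b \<eta> x + (\<Gamma> x $ b) *v \<eta> x))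
      - (partial b (\<lambda>y. conn \<Gamma> \<eta> y $ a) x + (\<Gamma> x $ b) *v (partial a \<eta> x + (\<Gamma> x $ a) *v \<eta> x)))"
      by (simp add: conn_wedge_def conn_def)
    have rhs: "curv_at \<Gamma> x (\<eta> x) $ a $ b = (1/2) *\<^sub>R ((partial a (\<lambda>y. \<Gamma> y $ b) x *v \<eta> x)
       - (partial b (\<lambda>y. \<Gamma> y $ a) x *v \<eta> x) + (\<Gamma> x $ a) *v ((\<Gamma> x $ b) *v \<eta> x)
       - (\<Gamma> x $ b) *v ((\<Gamma> x $ a) *v \<eta> x))"
      by (simp add: curv_at_def curv_def scaleR_matrix_vector_assoc[symmetric]
          matrix_vector_mul_assoc[symmetric] matrix_vector_mult_add_rdistrib matrix_vector_mult_diff_rdistrib)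
    show ?thesis
      unfolding lhs rhs pc[of a b] pc[of b a] partial_commute[OF assms(1,2,3), of a b]
      by (simp add: matrix_vector_right_distrib algebra_simps)
  qed
  then show ?thesis
    by (simp add: vec_eq_iff)
qed

lemma conn_wedge_sub_conn_eq_0:
  assumes "open U" "smooth_on \<Gamma> U" "open V" "V \<subseteq> U" "smooth_on \<phi> V" "smooth_on \<psi> V"
    and "\<forall>x\<in>V. conn_wedge \<Gamma> \<phi> x = curv_at \<Gamma> x (\<psi> x)" "x \<in> V"
  shows "conn_wedge \<Gamma> (\<lambda>y. \<phi> y - conn \<Gamma> \<psi> y) x = 0"
proof -
  have "smooth_on (conn \<Gamma> \<psi>) V"
    using smooth_on_conn[OF assms(3) smooth_on_subset[OF assms(2,4)] assms(6)] .
  then have "conn_wedge \<Gamma> (\<lambda>y. \<phi> y - conn \<Gamma> \<psi> y) x = conn_wedge \<Gamma> \<phi> x - conn_wedge \<Gamma> (conn \<Gamma> \<psi>) x"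
    using assms(3,5,8) by (intro conn_wedge_diff smooth_on_imp_differentiable_at)
  also have "\<dots> = 0"
    using assms conn_wedge_conn[OF assms(3,8) smooth_on_imp_Ck_on[OF assms(6)]]
      smooth_on_imp_differentiable_at[OF assms(1,2)] by auto
  finally show ?thesis .
qed

subsection \<open>Exactness\<close>

lemma exact_connE:
  assumes "exact_conn \<Gamma> U" "open V" "V \<subseteq> U" "smooth_on \<phi> V" "smooth_on \<psi> V"
    and "\<forall>y\<in>V. conn_wedge \<Gamma> \<phi> y = curv_at \<Gamma> y (\<psi> y)" "x \<in> V"
  obtains W \<eta> where "open W" "x \<in> W" "W \<subseteq> V" "smooth_on \<eta> W" "\<forall>y\<in>W. conn \<Gamma> \<eta> y = \<phi> y"
proof -
  have "\<exists>W \<eta>. open W \<and> x \<in> W \<and> W \<subseteq> V \<and> smooth_on \<eta> W \<and> (\<forall>y\<in>W. conn \<Gamma> \<eta> y = \<phi> y)"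
    using assms(1)[unfolded exact_conn_def, rule_format, of V \<phi> \<psi>] assms(2-7) by blast
  with that show ?thesis by blast
qed

lemma complex_exactE:
  assumes "complex_exact \<Gamma> U" "open V" "V \<subseteq> U" "smooth_on \<phi> V"
    and "\<forall>y\<in>V. conn_wedge \<Gamma> \<phi> y = 0" "x \<in> V"
  obtains W \<eta> where "open W" "x \<in> W" "W \<subseteq> V" "smooth_on \<eta> W"
    "\<forall>y\<in>W. curv_at \<Gamma> y (\<eta> y) = 0" "\<forall>y\<in>W. conn \<Gamma> \<eta> y = \<phi> y"
proof -
  have "\<exists>W \<eta>. open W \<and> x \<in> W \<and> W \<subseteq> V \<and> smooth_on \<eta> W \<and>
      (\<forall>y\<in>W. curv_at \<Gamma> y (\<eta> y) = 0) \<and> (\<forall>y\<in>W. conn \<Gamma> \<eta> y = \<phi> y)"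
    using assms(1)[unfolded complex_exact_def, rule_format, of V \<phi>] assms(2-6) by blast
  with that show ?thesis by blast
qed

lemma exact_conn_imp_complex_exact:
  assumes "open U" "smooth_on \<Gamma> U" "exact_conn \<Gamma> U"
  shows "complex_exact \<Gamma> U"
  unfolding complex_exact_def
proof (intro allI impI ballI, elim conjE)
  fix V \<phi> x
  assume V: "open V" "V \<subseteq> U" and \<phi>: "smooth_on \<phi> V" and closed: "\<forall>y\<in>V. conn_wedge \<Gamma> \<phi> y = 0"
    and "x \<in> V"
  obtain W \<eta> where W: "open W" "x \<in> W" "W \<subseteq> V" "smooth_on \<eta> W" "\<forall>y\<in>W. conn \<Gamma> \<eta> y = \<phi> y"
    using exact_connE[OF assms(3) V \<phi> smooth_on_const _ \<open>x \<in> V\<close>, of 0] closed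
    by (auto simp: curv_at_zero)
  have "curv_at \<Gamma> y (\<eta> y) = 0" if "y \<in> W" for y
  proof -
    have "curv_at \<Gamma> y (\<eta> y) = conn_wedge \<Gamma> (conn \<Gamma> \<eta>) y"
      using W V that smooth_on_imp_differentiable_at[OF assms(1,2)]
      by (subst conn_wedge_conn[OF W(1) that smooth_on_imp_Ck_on[OF W(4)]]) auto
    also have "\<dots> = conn_wedge \<Gamma> \<phi> y"
      using W(5) by (intro conn_wedge_cong_open[OF W(1) that]) simp
    also have "\<dots> = 0"
      using closed W(3) that by blast
    finally show ?thesis .
  qed
  with W show "\<exists>W \<eta>. open W \<and> x \<in> W \<and> W \<subseteq> V \<and> smooth_on \<eta> W \<and>
      (\<forall>y\<in>W. curv_at \<Gamma> y (\<eta> y) = 0) \<and> (\<forall>y\<in>W. conn \<Gamma> \<eta> y = \<phi> y)"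
    by blast
qed

lemma complex_exact_imp_exact_conn:
  assumes "open U" "smooth_on \<Gamma> U" "complex_exact \<Gamma> U"
  shows "exact_conn \<Gamma> U"
  unfolding exact_conn_def
proof (intro allI impI ballI, elim conjE)
  fix V \<phi> \<psi> x
  assume V: "open V" "V \<subseteq> U" and \<phi>: "smooth_on \<phi> V" and \<psi>: "smooth_on \<psi> V"
    and eq: "\<forall>y\<in>V. conn_wedge \<Gamma> \<phi> y = curv_at \<Gamma> y (\<psi> y)" and "x \<in> V"
  have "smooth_on (\<lambda>y. \<phi> y - conn \<Gamma> \<psi> y) V"
    using smooth_on_conn[OF V(1) smooth_on_subset[OF assms(2) V(2)] \<psi>] by (rule smooth_on_diff[OF V(1) \<phi>])
  moreover have "\<forall>y\<in>V. conn_wedge \<Gamma> (\<lambda>y. \<phi> y - conn \<Gamma> \<psi> y) y = 0"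
    using conn_wedge_sub_conn_eq_0[OF assms(1,2) V \<phi> \<psi> eq] by blast
  ultimately obtain W \<eta> where W: "open W" "x \<in> W" "W \<subseteq> V" "smooth_on \<eta> W"
      "\<forall>y\<in>W. conn \<Gamma> \<eta> y = \<phi> y - conn \<Gamma> \<psi> y"
    by (rule complex_exactE[OF assms(3) V _ _ \<open>x \<in> V\<close>])
  have \<psi>_W: "smooth_on \<psi> W"
    using smooth_on_subset[OF \<psi> W(3)] .
  have "conn \<Gamma> (\<lambda>y. \<eta> y + \<psi> y) y = \<phi> y" if "y \<in> W" for y
    using conn_add[OF smooth_on_imp_differentiable_at[OF W(1,4) that]
        smooth_on_imp_differentiable_at[OF W(1) \<psi>_W that]] W(5) that
    by simp
  with W smooth_on_add[OF W(1,4) \<psi>_W]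
  show "\<exists>W \<eta>. open W \<and> x \<in> W \<and> W \<subseteq> V \<and> smooth_on \<eta> W \<and> (\<forall>y\<in>W. conn \<Gamma> \<eta> y = \<phi> y)"
    by blast
qed

lemma wedge_injective_imp_exact_conn:
  assumes "open U" "smooth_on \<Gamma> U" "wedge_injective \<Gamma> U"
  shows "exact_conn \<Gamma> U"
  unfolding exact_conn_def
proof (intro allI impI ballI, elim conjE)
  fix V \<phi> \<psi> x
  assume V: "open V" "V \<subseteq> U" and \<phi>: "smooth_on \<phi> V" and \<psi>: "smooth_on \<psi> V"
    and eq: "\<forall>y\<in>V. conn_wedge \<Gamma> \<phi> y = curv_at \<Gamma> y (\<psi> y)" and "x \<in> V"
  have "smooth_on (\<lambda>y. \<phi> y - conn \<Gamma> \<psi> y) V"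
    using smooth_on_conn[OF V(1) smooth_on_subset[OF assms(2) V(2)] \<psi>] by (rule smooth_on_diff[OF V(1) \<phi>])
  moreover have "\<forall>y\<in>V. conn_wedge \<Gamma> (\<lambda>y. \<phi> y - conn \<Gamma> \<psi> y) y = 0"
    using conn_wedge_sub_conn_eq_0[OF assms(1,2) V \<phi> \<psi> eq] by blast
  ultimately have "\<forall>y\<in>V. \<phi> y - conn \<Gamma> \<psi> y = 0"
    using assms(3) V unfolding wedge_injective_def by blast
  then have "\<forall>y\<in>V. conn \<Gamma> \<psi> y = \<phi> y"
    by simp
  with V(1) \<psi> \<open>x \<in> V\<close>
  show "\<exists>W \<eta>. open W \<and> x \<in> W \<and> W \<subseteq> V \<and> smooth_on \<eta> W \<and> (\<forall>y\<in>W. conn \<Gamma> \<eta> y = \<phi> y)"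
    by blast
qed

lemma complex_exact_imp_wedge_injective:
  assumes "complex_exact \<Gamma> U" "curv_injective \<Gamma> U"
  shows "wedge_injective \<Gamma> U"
  unfolding wedge_injective_def
proof (intro allI impI ballI, elim conjE)
  fix V \<phi> x
  assume V: "open V" "V \<subseteq> U" and \<phi>: "smooth_on \<phi> V" and closed: "\<forall>y\<in>V. conn_wedge \<Gamma> \<phi> y = 0"
    and "x \<in> V"
  obtain W \<eta> where W: "open W" "x \<in> W" "W \<subseteq> V" "\<forall>y\<in>W. curv_at \<Gamma> y (\<eta> y) = 0"
      "\<forall>y\<in>W. conn \<Gamma> \<eta> y = \<phi> y"
    by (rule complex_exactE[OF assms(1) V \<phi> closed \<open>x \<in> V\<close>])
  have "\<eta> y = 0" if "y \<in> W" for y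
  proof (rule injD)
    show "inj (curv_at \<Gamma> y)"
      using assms(2) W(3) V(2) that unfolding curv_injective_def by blast
    show "curv_at \<Gamma> y (\<eta> y) = curv_at \<Gamma> y 0"
      using W(4) that by (simp add: curv_at_zero)
  qed
  then have "conn \<Gamma> \<eta> x = conn \<Gamma> (\<lambda>_. 0) x"
    by (rule conn_cong_open[OF W(1,2)])
  then show "\<phi> x = 0"
    using W(2,5) by (simp add: conn_zero)
qed

theorem proposition2p4:
  fixes \<Gamma> :: "real^'n::finite \<Rightarrow> real^'r::finite^'r^'n" and U :: "(real^'n) set"
  assumes "open U" and "smooth_on \<Gamma> U" and "curv_const_rank \<Gamma> U"
  shows "(exact_conn \<Gamma> U \<longleftrightarrow> complex_exact \<Gamma> U)
       \<and> (wedge_injective \<Gamma> U \<longrightarrow> exact_conn \<Gamma> U)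
       \<and> (exact_conn \<Gamma> U \<and> curv_injective \<Gamma> U \<longrightarrow> wedge_injective \<Gamma> U)"
  using exact_conn_imp_complex_exact[OF assms(1,2)] complex_exact_imp_exact_conn[OF assms(1,2)]
    wedge_injective_imp_exact_conn[OF assms(1,2)] complex_exact_imp_wedge_injective
  by blast

end
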